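(* The multiplication map $m:\Omega^1_{\mathcal D}(\mathcal A)\otimes_{\mathcal A}\Omega^1_{\mathcal D}(\mathcal A)\to\Omega^2_{\mathcal D}(\mathcal A)$ is surjective and satisfies, for all $a_i,b_i\in\mathcal A$, $$m\Big(\sum_{i=1}^3 e_ia_i\otimes\sum_{j=1}^3 e_jb_j\Big)=\sum_{1\le i<j\le 3}e_{ij}(a_ib_j-a_jb_i).$$
   Context: Let $\mathcal O_3$ be the Cuntz algebra with three generators: the universal C*-algebra generated by $S_1,S_2,S_3$ with $S_i^*S_i=1$ ($i=1,2,3$) and $\sum_{j=1}^3 S_jS_j^*=1$. Let $\mathcal A$ be the unital $*$-subalgebra of $\mathcal O_3$ generated (algebraically) by $S_1,S_2,S_3$ (the paper denotes it also by $\mathcal O_3$). For $A=(a_{ij})\in SO(3)$, $\alpha_A(S_i)=\sum_j a_{ij}S_j$ defines an automorphism; differentiating along the one-parameter subgroups $\exp(\theta X_k)$ of $SO(3)$ gives three $*$-derivations $\partial_1,\partial_2,\partial_3$ of $\mathcal A$, determined by $\partial_1S_1=0,\ \partial_1S_2=-S_3,\ \partial_1S_3=S_2$; $\partial_2S_1=-S_3,\ \partial_2S_2=0,\ \partial_2S_3=S_1$; $\partial_3S_1=S_2,\ \partial_3S_2=-S_1,\ \partial_3S_3=0$. They satisfy $[\partial_1,\partial_2]=-\partial_3$, $[\partial_2,\partial_3]=\partial_1$, $[\partial_1,\partial_3]=-\partial_2$. Let $\tau$ be the unique (faithful) KMS state of $\mathcal O_3$, $\mathcal H=L^2(\mathcal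 O_3,\tau)\otimes\mathbb C^N$, $\pi(a)=a\otimes I$ (left multiplication), and $\mathcal D=\sum_{i=1}^3\partial_i\otimes\sigma_i$, where $\sigma_1,\sigma_2,\sigma_3\in M_N(\mathbb C)$ satisfy $\sigma_i^2=I$, $\sigma_i\sigma_j=-\sigma_j\sigma_i$ ($i\neq j$), and both $\{\sigma_1,\sigma_2,\sigma_3\}$ and $\{I,\sigma_1\sigma_2,\sigma_1\sigma_3,\sigma_2\sigma_3\}$ are linearly independent (e.g. the $2\times 2$ Pauli matrices). Then $[\mathcal D,\pi(a)]=\sum_i\partial_i(a)\otimes\sigma_i$. Let $(\Omega^\bullet(\mathcal A),\delta)$ be the universal differential algebra of $\mathcal A$ and $\Pi(a_0\delta a_1\cdots\delta a_k)=\pi(a_0)[\mathcal D,\pi(a_1)]\cdots[\mathcal D,\pi(a_k)]$. With $J_0^k=\ker\Pi\cap\Omega^k(\mathcal A)$, the Connes space of $k$-forms is $\Omega^k_{\mathcal D}(\mathcal A)=\Pi(\Omega^k(\mathcal A))/\Pi(\delta J_0^{k-1})$. The multiplication $m$ sends (class of $\Pi(\omega)$)$\otimes$(class of $\Pi(\eta)$) to the class of $\Pi(\omega\eta)$. It is known that $\Omega^1_{\mathcal D}(\mathcal A)$ is free with basis $e_i=1\otimes\sigma_i$ ($i=1,2,3$), with $ae_i=e_ia$ for $a\in\mathcal A$, and $\Omega^2_{\mathcal D}(\mathcal A)$ is free with basis $e_{ij}$ = class of $1\otimes\sigma_i\sigma_j$ ($i<j$). *)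

theory Defs
  imports "HOL-Analysis.Finite_Cartesian_Product"
begin

text \<open>The algebra A is an abstract complex unital *-algebra (type 'a, a ring_1 with a
 central ring homomorphism sc from the complex numbers and a conjugate-linear involution st)
 generated by S 1, S 2, S 3 subject to the Cuntz relations. Operators of the form
 sum a_k (x) M_k on L2(O_3,tau) (x) C^N are modelled as N x N matrices over A
 (M_N(A) = A (x) M_N(C)); this is faithful since tau is faithful.\<close>

inductive_set gen_alg :: "(nat \<Rightarrow> 'a::ring_1) \<Rightarrow> ('a \<Rightarrow> 'a) \<Rightarrow> (complex \<Rightarrow> 'a) \<Rightarrow> 'a set"
  for S st sc where
  gen_S: "i \<in> {1,2,3} \<Longrightarrow> S i \<in> gen_alg S st sc"
| gen_Sstar: "i \<in> {1,2,3} \<Longrightarrow> st (S i) \<in> gen_alg S st sc"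
| gen_scalar: "sc z \<in> gen_alg S st sc"
| gen_add: "a \<in> gen_alg S st sc \<Longrightarrow> b \<in> gen_alg S st sc \<Longrightarrow> a + b \<in> gen_alg S st sc"
| gen_mult: "a \<in> gen_alg S st sc \<Longrightarrow> b \<in> gen_alg S st sc \<Longrightarrow> a * b \<in> gen_alg S st sc"

definition liftM :: "(complex \<Rightarrow> 'a::ring_1) \<Rightarrow> complex^'n^'n \<Rightarrow> 'a^'n^'n" where
  "liftM sc M = (\<chi> r c. sc (M $ r $ c))"

definition piA :: "'a::ring_1 \<Rightarrow> 'a^'n^'n" where
  "piA a = (\<chi> r c. if r = c then a else 0)"

text \<open>[D, pi(a)] = sum_i d_i(a) (x) sigma_i.\<close>
definition Dcomm :: "(complex \<Rightarrow> 'a::ring_1) \<Rightarrow> (nat \<Rightarrow> complex^'n^'n) \<Rightarrow> (nat \<Rightarrow> 'a \<Rightarrow> 'a)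
    \<Rightarrow> 'a \<Rightarrow> 'a^'n^'n" where
  "Dcomm sc \<sigma> der a = (\<Sum>i\<in>{1,2,3::nat}. piA (der i a) ** liftM sc (\<sigma> i))"

text \<open>Pi(delta a_1 ... delta a_k) = [D,a_1]...[D,a_k].\<close>
definition PiDelta :: "(complex \<Rightarrow> 'a::ring_1) \<Rightarrow> (nat \<Rightarrow> complex^'n^'n) \<Rightarrow> (nat \<Rightarrow> 'a \<Rightarrow> 'a)
    \<Rightarrow> 'a list \<Rightarrow> 'a^'n^'n" where
  "PiDelta sc \<sigma> der as = foldr (\<lambda>a M. Dcomm sc \<sigma> der a ** M) as (mat 1)"

text \<open>Pi(a_0 delta a_1 ... delta a_k) = pi(a_0)[D,a_1]...[D,a_k], for the list a_0 # as.\<close>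
definition PiForm :: "(complex \<Rightarrow> 'a::ring_1) \<Rightarrow> (nat \<Rightarrow> complex^'n^'n) \<Rightarrow> (nat \<Rightarrow> 'a \<Rightarrow> 'a)
    \<Rightarrow> 'a list \<Rightarrow> 'a^'n^'n" where
  "PiForm sc \<sigma> der as = piA (hd as) ** PiDelta sc \<sigma> der (tl as)"

text \<open>Pi(Omega^k(A)): images of finite sums of elementary k-forms a_0 delta a_1 ... delta a_k.\<close>
definition PiOmega :: "(complex \<Rightarrow> 'a::ring_1) \<Rightarrow> (nat \<Rightarrow> complex^'n^'n) \<Rightarrow> (nat \<Rightarrow> 'a \<Rightarrow> 'a)
    \<Rightarrow> nat \<Rightarrow> ('a^'n^'n) set" where
  "PiOmega sc \<sigma> der k = {sum_list (map (PiForm sc \<sigma> der) ts) | ts. \<forall>t\<in>set ts. length t = Suc k}"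

text \<open>Junk forms Pi(delta J_0^(k-1)) for k >= 1: for omega = sum a_0 delta a_1 ... delta a_(k-1)
 in Omega^(k-1) with Pi(omega) = 0, Pi(delta omega) = sum [D,a_0]...[D,a_(k-1)].
 (For k = 0 there is no junk.)\<close>
definition Junk :: "(complex \<Rightarrow> 'a::ring_1) \<Rightarrow> (nat \<Rightarrow> complex^'n^'n) \<Rightarrow> (nat \<Rightarrow> 'a \<Rightarrow> 'a)
    \<Rightarrow> nat \<Rightarrow> ('a^'n^'n) set" where
  "Junk sc \<sigma> der k = (if k = 0 then {0} else
     {sum_list (map (PiDelta sc \<sigma> der) ts) | ts.
        (\<forall>t\<in>set ts. length t = k) \<and> sum_list (map (PiForm sc \<sigma> der) ts) = 0})"

end

theory Submission
  imports Defs
begin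

text \<open>
  Every e_i a = 1 (x) sigma_i a is a genuine one-form: for each i some generator satisfies
  [D, S_j] = S_k (x) sigma_i + S_l (x) sigma_m (up to signs), and left multiplication by S_k^*
  kills the second summand by Cuntz orthogonality. Multiplying out
  (sum_i e_i a_i)(sum_j e_j b_j) with the Clifford relations leaves
  sum_(i<j) e_ij (a_i b_j - a_j b_i) plus (sum_i a_i b_i) (x) 1, and every c (x) 1 is junk:
  omega = h S_1^* delta S_1 has Pi(omega) = 0 because S_1^* d_k(S_1) = 0 for all k, whereas
  Pi(delta omega) = [D, h S_1^*][D, S_1] = 2h (x) 1. Surjectivity of m holds because
  a_0 delta a_1 delta a_2 = (a_0 delta a_1)(1 delta a_2).
\<close>

lemma matrix_add_rdistrib: "((A::'a::ring_1^'n^'n) + B) ** C = A ** C + B ** C"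
  by (vector matrix_matrix_mult_def sum.distrib[symmetric] distrib_right)

lemma matrix_minus_mult: "(- (A::'a::ring_1^'n^'n)) ** C = - (A ** C)"
  by (vector matrix_matrix_mult_def sum_negf[symmetric])

lemma piA_one: "piA 1 = (mat 1 :: 'a::ring_1^'n^'n)"
  by (simp add: piA_def mat_def)

lemma PiDelta_append:
  "PiDelta sc \<sigma> der (as @ bs) = PiDelta sc \<sigma> der as ** PiDelta sc \<sigma> der bs"
  by (induction as) (simp_all add: PiDelta_def matrix_mul_assoc)

lemma PiForm_Cons_append:
  "PiForm sc \<sigma> der (a # as @ bs) = PiForm sc \<sigma> der (a # as) ** PiForm sc \<sigma> der (1 # bs)"
  by (simp add: PiForm_def PiDelta_append piA_one matrix_mul_assoc)

lemma PiForm_in_PiOmega: "length t = Suc k \<Longrightarrow> PiForm sc \<sigma> der t \<in> PiOmega sc \<sigma> der k"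
  unfolding PiOmega_def by (intro CollectI exI[of _ "[t]"]) auto

lemma PiOmega_add:
  assumes "x \<in> PiOmega sc \<sigma> der k" "y \<in> PiOmega sc \<sigma> der k"
  shows "x + y \<in> PiOmega sc \<sigma> der k"
proof -
  obtain ts ts' where "\<forall>t\<in>set ts. length t = Suc k" "x = sum_list (map (PiForm sc \<sigma> der) ts)"
    and "\<forall>t\<in>set ts'. length t = Suc k" "y = sum_list (map (PiForm sc \<sigma> der) ts')"
    using assms unfolding PiOmega_def by blast
  then show ?thesis
    unfolding PiOmega_def by (intro CollectI exI[of _ "ts @ ts'"]) auto
qed

lemma PiOmega_sum_of_products:
  assumes "z \<in> PiOmega sc \<sigma> der (j + k)"
  shows "\<exists>ps. (\<forall>(x, y) \<in> set ps. x \<in> PiOmega sc \<sigma> der j \<and> y \<in> PiOmega sc \<sigma> der k) \<and>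
           z = sum_list (map (\<lambda>(x, y). x ** y) ps)"
proof -
  obtain ts where ts: "\<forall>t\<in>set ts. length t = Suc (j + k)"
    and z: "z = sum_list (map (PiForm sc \<sigma> der) ts)"
    using assms unfolding PiOmega_def by blast
  define halves where "halves t = (take (Suc j) t, 1 # drop (Suc j) t)" for t :: "'a list"
  let ?ps = "map (\<lambda>t. (PiForm sc \<sigma> der (fst (halves t)), PiForm sc \<sigma> der (snd (halves t)))) ts"
  have "PiForm sc \<sigma> der t = PiForm sc \<sigma> der (fst (halves t)) ** PiForm sc \<sigma> der (snd (halves t))"
    if length: "length t = Suc (j + k)" for t
  proof -
    obtain a as where "t = a # as" using length by (cases t) auto
    then show ?thesis
      using PiForm_Cons_append[of sc \<sigma> der a "take j as" "drop j as"] by (simp add: halves_def)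
  qed
  then have "z = sum_list (map (\<lambda>(x, y). x ** y) ?ps)"
    unfolding z using ts by (simp add: o_def cong: map_cong)
  moreover have "\<forall>(x, y) \<in> set ?ps. x \<in> PiOmega sc \<sigma> der j \<and> y \<in> PiOmega sc \<sigma> der k"
    using ts by (auto simp: halves_def intro!: PiForm_in_PiOmega)
  ultimately show ?thesis by blast
qed

lemma zero_in_Junk: "0 \<in> Junk sc \<sigma> der k"
  unfolding Junk_def by (auto intro!: exI[of _ "[]"])

locale central_scalars =
  fixes sc :: "complex \<Rightarrow> 'a::ring_1"
  assumes sc_add: "\<And>x y. sc (x + y) = sc x + sc y"
    and sc_mult: "\<And>x y. sc (x * y) = sc x * sc y"
    and sc_one: "sc 1 = 1"
    and sc_central: "\<And>z a. sc z * a = a * sc z"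
begin

lemma sc_zero: "sc 0 = 0"
  using sc_add[of 0 0] by simp

lemma sc_minus: "sc (- x) = - sc x"
  using minus_unique[of "sc x" "sc (- x)"] sc_add[of x "- x"] sc_zero by simp

lemma sc_sum: "sc (sum f A) = (\<Sum>x\<in>A. sc (f x))"
  by (induction A rule: infinite_finite_induct) (auto simp: sc_zero sc_add)

definition tensor :: "'a \<Rightarrow> complex^'n^'n \<Rightarrow> 'a^'n^'n" where
  "tensor a M = piA a ** liftM sc M"

lemma tensor_nth: "tensor a M $ r $ c = a * sc (M $ r $ c)"
  unfolding tensor_def matrix_matrix_mult_def piA_def liftM_def
  by (auto simp: if_distrib if_distribR sum.delta cong: if_cong)

lemma tensor_mult: "tensor a M ** tensor b N = tensor (a * b) (M ** N)"
proof -
  have "a * sc x * (b * sc y) = a * b * sc (x * y)" for x y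
  proof -
    have "a * sc x * (b * sc y) = a * (sc x * b) * sc y" by (simp add: mult.assoc)
    also have "\<dots> = a * b * sc (x * y)" by (simp add: sc_central[of x b] mult.assoc sc_mult)
    finally show ?thesis .
  qed
  then show ?thesis
    by (simp add: vec_eq_iff tensor_nth matrix_matrix_mult_def sc_sum sum_distrib_left)
qed

lemma tensor_add_left: "tensor (a + b) M = tensor a M + tensor b M"
  by (simp add: vec_eq_iff tensor_nth distrib_right)

lemma tensor_diff_left: "tensor (a - b) M = tensor a M - tensor b M"
  by (simp add: vec_eq_iff tensor_nth left_diff_distrib)

lemma tensor_minus_left: "tensor (- a) M = - tensor a M"
  by (simp add: vec_eq_iff tensor_nth)

lemma tensor_minus_right: "tensor a (- M) = - tensor a M"
  by (simp add: vec_eq_iff tensor_nth sc_minus)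

lemma tensor_zero_left [simp]: "tensor 0 M = 0"
  by (simp add: vec_eq_iff tensor_nth)

lemma piA_eq_tensor: "piA a = tensor a (mat 1)"
  by (simp add: vec_eq_iff tensor_nth piA_def mat_def sc_zero sc_one)

lemma liftM_mult_piA: "liftM sc M ** piA a = tensor a M"
  unfolding matrix_matrix_mult_def piA_def liftM_def
  by (simp add: vec_eq_iff tensor_nth if_distrib sc_central[of _ a] cong: if_cong)

lemma piA_mult: "piA ((a::'a) * b) = piA a ** piA b"
  by (simp add: piA_eq_tensor tensor_mult)

lemma piA_minus: "piA (- (a::'a)) = - piA a"
  by (simp add: piA_eq_tensor tensor_minus_left)

lemma sum_liftM_piA_3:
  "(\<Sum>i\<in>{1,2,3::nat}. liftM sc (\<sigma> i) ** piA (c i))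
     = tensor (c 1) (\<sigma> 1) + tensor (c 2) (\<sigma> 2) + tensor (c 3) (\<sigma> 3)"
  by (simp add: liftM_mult_piA add.assoc)

lemma sum_liftM_piA_pairs_3:
  "(\<Sum>(i, j)\<in>{(i, j). i \<in> {1,2,3::nat} \<and> j \<in> {1,2,3} \<and> i < j}. liftM sc (\<sigma> i ** \<sigma> j) ** piA (c i j))
     = tensor (c 1 2) (\<sigma> 1 ** \<sigma> 2) + tensor (c 1 3) (\<sigma> 1 ** \<sigma> 3) + tensor (c 2 3) (\<sigma> 2 ** \<sigma> 3)"
proof -
  have "{(i, j). i \<in> {1,2,3::nat} \<and> j \<in> {1,2,3} \<and> i < j} = {(1,2),(1,3),(2,3)}"
    by auto
  then show ?thesis by (simp add: liftM_mult_piA add.assoc)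
qed

lemma clifford_product_decomposition:
  fixes a b :: "nat \<Rightarrow> 'a" and x y z :: "complex^'n^'n"
  assumes sq: "x ** x = mat 1" "y ** y = mat 1" "z ** z = mat 1"
    and anti: "y ** x = - (x ** y)" "z ** x = - (x ** z)" "z ** y = - (y ** z)"
  shows "(tensor (a 1) x + tensor (a 2) y + tensor (a 3) z)
           ** (tensor (b 1) x + tensor (b 2) y + tensor (b 3) z)
         - (tensor (a 1 * b 2 - a 2 * b 1) (x ** y) + tensor (a 1 * b 3 - a 3 * b 1) (x ** z)
            + tensor (a 2 * b 3 - a 3 * b 2) (y ** z))
         = tensor (a 1 * b 1 + a 2 * b 2 + a 3 * b 3) (mat 1)"
  unfolding matrix_add_ldistrib matrix_add_rdistrib tensor_mult sq anti tensor_minus_right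
    tensor_diff_left tensor_add_left
  by (simp only: diff_conv_add_uminus minus_add add_ac) (simp add: add_ac)

end

locale cuntz_dirac = central_scalars sc for sc :: "complex \<Rightarrow> 'a::ring_1" +
  fixes S :: "nat \<Rightarrow> 'a" and st :: "'a \<Rightarrow> 'a" and der :: "nat \<Rightarrow> 'a \<Rightarrow> 'a"
    and \<sigma> :: "nat \<Rightarrow> complex^'n^'n"
  assumes st_add: "\<And>a b. st (a + b) = st a + st b"
    and cuntz_orth: "\<And>i j. i \<in> {1,2,3} \<Longrightarrow> j \<in> {1,2,3} \<Longrightarrow>
                       st (S i) * S j = (if i = j then 1 else 0)"
    and der_leibniz: "\<And>k a b. k \<in> {1,2,3} \<Longrightarrow> der k (a * b) = der k a * b + a * der k b"
    and der_star: "\<And>k a. k \<in> {1,2,3} \<Longrightarrow> der k (st a) = st (der k a)"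
    and d1: "der 1 (S 1) = 0" "der 1 (S 2) = - S 3" "der 1 (S 3) = S 2"
    and d2: "der 2 (S 1) = - S 3" "der 2 (S 2) = 0" "der 2 (S 3) = S 1"
    and d3: "der 3 (S 1) = S 2" "der 3 (S 2) = - S 1" "der 3 (S 3) = 0"
    and sigma_sq: "\<And>i. i \<in> {1,2,3} \<Longrightarrow> \<sigma> i ** \<sigma> i = mat 1"
    and sigma_anti: "\<And>i j. i \<in> {1,2,3} \<Longrightarrow> j \<in> {1,2,3} \<Longrightarrow> i \<noteq> j \<Longrightarrow>
                       \<sigma> i ** \<sigma> j = - (\<sigma> j ** \<sigma> i)"
begin

abbreviation "Dc \<equiv> Dcomm sc \<sigma> der"
abbreviation "PF \<equiv> PiForm sc \<sigma> der"
abbreviation "Omega \<equiv> PiOmega sc \<sigma> der"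

lemma st_zero: "st 0 = 0"
  using st_add[of 0 0] by simp

lemma st_minus: "st (- x) = - st x"
  using minus_unique[of "st x" "st (- x)"] st_add[of x "- x"] st_zero by simp

lemma Dcomm_eq: "Dc a = tensor (der 1 a) (\<sigma> 1) + tensor (der 2 a) (\<sigma> 2) + tensor (der 3 a) (\<sigma> 3)"
  by (simp add: Dcomm_def tensor_def add.assoc)

lemma Dcomm_mult: "Dc (x * y) = piA x ** Dc y + Dc x ** piA y"
  by (simp add: Dcomm_eq der_leibniz tensor_add_left piA_eq_tensor tensor_mult
      matrix_add_ldistrib matrix_add_rdistrib algebra_simps)

lemma PiForm_2: "PF [a, b] = piA a ** Dc b"
  by (simp add: PiForm_def PiDelta_def)

lemma PiForm_3: "PF [a, b, c] = piA a ** Dc b ** Dc c"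
  by (simp add: PiForm_def PiDelta_def matrix_mul_assoc)

lemma PiForm_2_mult_in_Omega_2: "PF [a, b] ** PF [c, d] \<in> Omega 2"
proof -
  have "PF [a, b] ** PF [c, d] = PF [a, b * c, d] + PF [- (a * b), c, d]"
    by (simp add: PiForm_2 PiForm_3 Dcomm_mult piA_mult piA_minus matrix_minus_mult
        matrix_add_ldistrib matrix_add_rdistrib matrix_mul_assoc)
  then show ?thesis
    by (simp add: PiOmega_add PiForm_in_PiOmega)
qed

lemma Dcomm_S1: "Dc (S 1) = tensor (- S 3) (\<sigma> 2) + tensor (S 2) (\<sigma> 3)"
  unfolding Dcomm_eq d1 d2 d3 by simp

lemma Dcomm_S2: "Dc (S 2) = tensor (- S 3) (\<sigma> 1) + tensor (- S 1) (\<sigma> 3)"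
  unfolding Dcomm_eq d1 d2 d3 by simp

lemma Dcomm_S3: "Dc (S 3) = tensor (S 2) (\<sigma> 1) + tensor (S 1) (\<sigma> 2)"
  unfolding Dcomm_eq d1 d2 d3 by simp

lemma Dcomm_st_S1: "Dc (st (S 1)) = tensor (- st (S 3)) (\<sigma> 2) + tensor (st (S 2)) (\<sigma> 3)"
  unfolding Dcomm_eq using der_star[of _ "S 1"] d1 d2 d3 by (simp add: st_zero st_minus)

lemma tensor_sigma_eq_PiForm: "i \<in> {1,2,3} \<Longrightarrow> \<exists>u v. tensor c (\<sigma> i) = PF [u, v]"
proof -
  have "tensor c (\<sigma> 1) = PF [- (c * st (S 3)), S 2]"
    unfolding PiForm_2 Dcomm_S2
    by (simp add: piA_eq_tensor tensor_mult matrix_add_ldistrib mult.assoc cuntz_orth)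
  moreover have "tensor c (\<sigma> 2) = PF [c * st (S 1), S 3]"
    unfolding PiForm_2 Dcomm_S3
    by (simp add: piA_eq_tensor tensor_mult matrix_add_ldistrib mult.assoc cuntz_orth)
  moreover have "tensor c (\<sigma> 3) = PF [c * st (S 2), S 1]"
    unfolding PiForm_2 Dcomm_S1
    by (simp add: piA_eq_tensor tensor_mult matrix_add_ldistrib mult.assoc cuntz_orth)
  ultimately show "i \<in> {1,2,3} \<Longrightarrow> ?thesis" by blast
qed

lemma tensor_sigma_in_Omega_1:
  assumes "i \<in> {1,2,3}"
  shows "tensor c (\<sigma> i) \<in> Omega 1"
proof -
  obtain u v where "tensor c (\<sigma> i) = PF [u, v]"
    using tensor_sigma_eq_PiForm assms by blast
  then show ?thesis
    using PiForm_in_PiOmega[of "[u, v]" 1] by simp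
qed

lemma tensor_sigma_mult_in_Omega_2:
  assumes "i \<in> {1,2,3}" "j \<in> {1,2,3}"
  shows "tensor c (\<sigma> i ** \<sigma> j) \<in> Omega 2"
proof -
  obtain u v where "tensor c (\<sigma> i) = PF [u, v]"
    using tensor_sigma_eq_PiForm assms(1) by blast
  moreover obtain u' v' where "tensor 1 (\<sigma> j) = PF [u', v']"
    using tensor_sigma_eq_PiForm assms(2) by blast
  moreover have "tensor c (\<sigma> i ** \<sigma> j) = tensor c (\<sigma> i) ** tensor 1 (\<sigma> j)"
    by (simp add: tensor_mult)
  ultimately show ?thesis using PiForm_2_mult_in_Omega_2 by simp
qed

lemma piA_st_S1_mult_Dcomm_S1: "piA (st (S 1)) ** Dc (S 1) = 0"
  unfolding Dcomm_S1 by (simp add: piA_eq_tensor tensor_mult matrix_add_ldistrib cuntz_orth)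

lemma PiForm_st_S1_vanishes: "PF [h * st (S 1), S 1] = 0"
  unfolding PiForm_2 piA_mult matrix_mul_assoc[symmetric] piA_st_S1_mult_Dcomm_S1 by simp

lemma Dcomm_st_S1_mult_Dcomm_S1: "Dc (st (S 1)) ** Dc (S 1) = tensor 2 (mat 1)"
proof -
  have "Dc (st (S 1)) ** Dc (S 1) = tensor 1 (mat 1) + tensor 1 (mat 1)"
    unfolding Dcomm_st_S1 Dcomm_S1 by (simp add: tensor_mult matrix_add_ldistrib matrix_add_rdistrib
        cuntz_orth sigma_sq sigma_anti[of 3 2])
  then show ?thesis by (simp add: tensor_add_left[symmetric] one_add_one)
qed

lemma tensor_one_in_Junk_2: "tensor c (mat 1) \<in> Junk sc \<sigma> der 2"
proof -
  define h where "h = c * sc (1/2)"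
  have "sc (1/2) * 2 = 1"
    using sc_mult[of "1/2" 2] sc_add[of 1 1] sc_one by simp
  then have h2: "h * 2 = c" by (simp add: h_def mult.assoc)
  have "PiDelta sc \<sigma> der [h * st (S 1), S 1] = Dc (h * st (S 1)) ** Dc (S 1)"
    by (simp add: PiDelta_def)
  also have "\<dots> = piA h ** (Dc (st (S 1)) ** Dc (S 1)) + Dc h ** (piA (st (S 1)) ** Dc (S 1))"
    by (simp add: Dcomm_mult matrix_add_rdistrib matrix_mul_assoc)
  also have "\<dots> = tensor c (mat 1)"
    unfolding Dcomm_st_S1_mult_Dcomm_S1 piA_st_S1_mult_Dcomm_S1
    by (simp add: piA_eq_tensor tensor_mult h2)
  finally show ?thesis
    unfolding Junk_def using PiForm_st_S1_vanishes[of h]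
    by (auto intro!: exI[of _ "[[h * st (S 1), S 1]]"])
qed

lemma one_form_product:
  fixes a b :: "nat \<Rightarrow> 'a"
  defines "\<alpha> \<equiv> \<Sum>i\<in>{1,2,3::nat}. liftM sc (\<sigma> i) ** piA (a i)"
    and "\<beta> \<equiv> \<Sum>j\<in>{1,2,3::nat}. liftM sc (\<sigma> j) ** piA (b j)"
    and "\<gamma> \<equiv> \<Sum>(i, j)\<in>{(i, j). i \<in> {1,2,3::nat} \<and> j \<in> {1,2,3} \<and> i < j}.
                 liftM sc (\<sigma> i ** \<sigma> j) ** piA (a i * b j - a j * b i)"
  shows "\<alpha> \<in> Omega 1 \<and> \<beta> \<in> Omega 1 \<and> \<gamma> \<in> Omega 2 \<and> \<alpha> ** \<beta> - \<gamma> \<in> Junk sc \<sigma> der 2"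
proof -
  have \<alpha>: "\<alpha> = tensor (a 1) (\<sigma> 1) + tensor (a 2) (\<sigma> 2) + tensor (a 3) (\<sigma> 3)"
    unfolding \<alpha>_def by (rule sum_liftM_piA_3)
  have \<beta>: "\<beta> = tensor (b 1) (\<sigma> 1) + tensor (b 2) (\<sigma> 2) + tensor (b 3) (\<sigma> 3)"
    unfolding \<beta>_def by (rule sum_liftM_piA_3)
  have \<gamma>: "\<gamma> = tensor (a 1 * b 2 - a 2 * b 1) (\<sigma> 1 ** \<sigma> 2) + tensor (a 1 * b 3 - a 3 * b 1) (\<sigma> 1 ** \<sigma> 3)
      + tensor (a 2 * b 3 - a 3 * b 2) (\<sigma> 2 ** \<sigma> 3)"
    unfolding \<gamma>_def using sum_liftM_piA_pairs_3[of \<sigma> "\<lambda>i j. a i * b j - a j * b i"] by simp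
  have "\<alpha> \<in> Omega 1" "\<beta> \<in> Omega 1"
    unfolding \<alpha> \<beta> by (intro PiOmega_add tensor_sigma_in_Omega_1; simp)+
  moreover have "\<gamma> \<in> Omega 2"
    unfolding \<gamma> by (intro PiOmega_add tensor_sigma_mult_in_Omega_2; simp)
  moreover have "\<alpha> ** \<beta> - \<gamma> = tensor (a 1 * b 1 + a 2 * b 2 + a 3 * b 3) (mat 1)"
    unfolding \<alpha> \<beta> \<gamma>
    by (rule clifford_product_decomposition[where a = a and b = b and x = "\<sigma> 1" and y = "\<sigma> 2" and z = "\<sigma> 3"];
        rule sigma_sq sigma_anti; simp)
  ultimately show ?thesis
    using tensor_one_in_Junk_2 by simp
qed

end

theorem mainTheorem3:
  fixes S :: "nat \<Rightarrow> 'a::ring_1"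
    and st :: "'a \<Rightarrow> 'a"
    and sc :: "complex \<Rightarrow> 'a"
    and der :: "nat \<Rightarrow> 'a \<Rightarrow> 'a"
    and \<sigma> :: "nat \<Rightarrow> complex^'n^'n"
  assumes sc_add: "\<And>x y. sc (x + y) = sc x + sc y"
    and sc_mult: "\<And>x y. sc (x * y) = sc x * sc y"
    and sc_one: "sc 1 = 1"
    and sc_central: "\<And>z a. sc z * a = a * sc z"
    and st_add: "\<And>a b. st (a + b) = st a + st b"
    and st_mult: "\<And>a b. st (a * b) = st b * st a"
    and st_invol: "\<And>a. st (st a) = a"
    and st_sc: "\<And>z. st (sc z) = sc (cnj z)"
    and cuntz_orth: "\<And>i j. i \<in> {1,2,3} \<Longrightarrow> j \<in> {1,2,3} \<Longrightarrow>
                       st (S i) * S j = (if i = j then 1 else 0)"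
    and cuntz_sum: "(\<Sum>j\<in>{1,2,3::nat}. S j * st (S j)) = 1"
    and generated: "\<And>a. a \<in> gen_alg S st sc"
    and der_add: "\<And>k a b. k \<in> {1,2,3} \<Longrightarrow> der k (a + b) = der k a + der k b"
    and der_leibniz: "\<And>k a b. k \<in> {1,2,3} \<Longrightarrow> der k (a * b) = der k a * b + a * der k b"
    and der_scalar: "\<And>k z. k \<in> {1,2,3} \<Longrightarrow> der k (sc z) = 0"
    and der_star: "\<And>k a. k \<in> {1,2,3} \<Longrightarrow> der k (st a) = st (der k a)"
    and d1: "der 1 (S 1) = 0" "der 1 (S 2) = - S 3" "der 1 (S 3) = S 2"
    and d2: "der 2 (S 1) = - S 3" "der 2 (S 2) = 0" "der 2 (S 3) = S 1"
    and d3: "der 3 (S 1) = S 2" "der 3 (S 2) = - S 1" "der 3 (S 3) = 0"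
    and sigma_sq: "\<And>i. i \<in> {1,2,3} \<Longrightarrow> \<sigma> i ** \<sigma> i = mat 1"
    and sigma_anti: "\<And>i j. i \<in> {1,2,3} \<Longrightarrow> j \<in> {1,2,3} \<Longrightarrow> i \<noteq> j \<Longrightarrow>
                       \<sigma> i ** \<sigma> j = - (\<sigma> j ** \<sigma> i)"
    and sigma_indep1: "\<And>c1 c2 c3. (\<chi> r s. c1 * \<sigma> 1 $ r $ s + c2 * \<sigma> 2 $ r $ s + c3 * \<sigma> 3 $ r $ s) = 0
                         \<Longrightarrow> c1 = 0 \<and> c2 = 0 \<and> c3 = 0"
    and sigma_indep2: "\<And>c0 c1 c2 c3. (\<chi> r s. c0 * mat 1 $ r $ s + c1 * (\<sigma> 1 ** \<sigma> 2) $ r $ s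
                           + c2 * (\<sigma> 1 ** \<sigma> 3) $ r $ s + c3 * (\<sigma> 2 ** \<sigma> 3) $ r $ s) = 0
                         \<Longrightarrow> c0 = 0 \<and> c1 = 0 \<and> c2 = 0 \<and> c3 = 0"
  shows
    "(\<forall>z \<in> PiOmega sc \<sigma> der 2. \<exists>ps.
        (\<forall>(x, y) \<in> set ps. x \<in> PiOmega sc \<sigma> der 1 \<and> y \<in> PiOmega sc \<sigma> der 1) \<and>
        z - sum_list (map (\<lambda>(x, y). x ** y) ps) \<in> Junk sc \<sigma> der 2)
     \<and>
     (\<forall>a b :: nat \<Rightarrow> 'a.
        (\<Sum>i\<in>{1,2,3::nat}. liftM sc (\<sigma> i) ** piA (a i)) \<in> PiOmega sc \<sigma> der 1 \<and>
        (\<Sum>j\<in>{1,2,3::nat}. liftM sc (\<sigma> j) ** piA (b j)) \<in> PiOmega sc \<sigma> der 1 \<and>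
        (\<Sum>(i, j)\<in>{(i, j). i \<in> {1,2,3::nat} \<and> j \<in> {1,2,3} \<and> i < j}.
            liftM sc (\<sigma> i ** \<sigma> j) ** piA (a i * b j - a j * b i)) \<in> PiOmega sc \<sigma> der 2 \<and>
        (\<Sum>i\<in>{1,2,3::nat}. liftM sc (\<sigma> i) ** piA (a i))
          ** (\<Sum>j\<in>{1,2,3::nat}. liftM sc (\<sigma> j) ** piA (b j))
        - (\<Sum>(i, j)\<in>{(i, j). i \<in> {1,2,3::nat} \<and> j \<in> {1,2,3} \<and> i < j}.
            liftM sc (\<sigma> i ** \<sigma> j) ** piA (a i * b j - a j * b i))
        \<in> Junk sc \<sigma> der 2)"
proof -
  \<comment> \<open>The remaining hypotheses only serve the freeness of the module of forms, not asserted here.\<close>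
  interpret central_scalars sc
    by unfold_locales (fact sc_add sc_mult sc_one sc_central)+
  interpret cuntz_dirac sc S st der \<sigma>
    by unfold_locales (fact st_add cuntz_orth der_leibniz der_star d1 d2 d3 sigma_sq sigma_anti)+
  have products: "\<exists>ps. (\<forall>(x, y) \<in> set ps. x \<in> Omega 1 \<and> y \<in> Omega 1) \<and>
      z - sum_list (map (\<lambda>(x, y). x ** y) ps) \<in> Junk sc \<sigma> der 2"
    if "z \<in> Omega 2" for z
  proof -
    from \<open>z \<in> Omega 2\<close> have "z \<in> Omega (1 + 1)" unfolding one_add_one .
    then obtain ps where "\<forall>(x, y) \<in> set ps. x \<in> Omega 1 \<and> y \<in> Omega 1"
      and "z = sum_list (map (\<lambda>(x, y). x ** y) ps)"
      by (blast dest: PiOmega_sum_of_products)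
    then show ?thesis
      using zero_in_Junk by (intro exI[of _ ps]) simp
  qed
  show ?thesis
    by (intro conjI ballI allI one_form_product products)
qed

end
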